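(* Let $n=p_1^{m_1}\cdots p_k^{m_k}$ be neither prime nor the square of a prime, and let $T=\prod_{i=1}^k(m_i+1)-2$ be the number of vertices of $\mathcal E_{\mathbb Z_n}$. Then $b(\mathcal E_{\mathbb Z_n})\le T$, with equality if and only if one of the following holds: (i) $k=1$ and $m_1>2$; (ii) $k=2$ and $m_1=m_2=1$; (iii) $k\ge2$ and $m_i>1$ for at least one $i$.
   Context: Primes $p_1<\dots<p_k$, positive integers $m_i$. The essential ideal graph $\mathcal E_{\mathbb Z_n}$ has vertices the nonzero proper ideals of $\mathbb Z_n$, with distinct $I,K$ adjacent iff $I+K$ is essential (meets every nonzero ideal nontrivially). For a graph $\Gamma$, $b(\Gamma)$ denotes the largest eigenvalue of its Laplacian matrix $D-A$. *)

theory Defs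
  imports Complex_Main "HOL-Number_Theory.Residues" "HOL-Algebra.Ideal"
begin

definition essential_ideal :: "('a, 'b) ring_scheme \<Rightarrow> 'a set \<Rightarrow> bool" where
  "essential_ideal R J \<longleftrightarrow> ideal J R \<and>
     (\<forall>L. ideal L R \<and> L \<noteq> {\<zero>\<^bsub>R\<^esub>} \<longrightarrow> J \<inter> L \<noteq> {\<zero>\<^bsub>R\<^esub>})"

definition eig_vertices :: "('a, 'b) ring_scheme \<Rightarrow> 'a set set" where
  "eig_vertices R = {I. ideal I R \<and> I \<noteq> {\<zero>\<^bsub>R\<^esub>} \<and> I \<noteq> carrier R}"

definition eig_adj :: "('a, 'b) ring_scheme \<Rightarrow> 'a set \<Rightarrow> 'a set \<Rightarrow> bool" where
  "eig_adj R I K \<longleftrightarrow> I \<noteq> K \<and> essential_ideal R (I <+>\<^bsub>R\<^esub> K)"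

definition laplacian :: "'v set \<Rightarrow> ('v \<Rightarrow> 'v \<Rightarrow> bool) \<Rightarrow> 'v \<Rightarrow> 'v \<Rightarrow> real" where
  "laplacian V E u w =
     (if u = w then real (card {x\<in>V. E u x}) else 0) - (if E u w then 1 else 0)"

definition mat_eigenvalue :: "'v set \<Rightarrow> ('v \<Rightarrow> 'v \<Rightarrow> real) \<Rightarrow> real \<Rightarrow> bool" where
  "mat_eigenvalue V M c \<longleftrightarrow>
     (\<exists>x :: 'v \<Rightarrow> real. (\<exists>v\<in>V. x v \<noteq> 0) \<and>
        (\<forall>u\<in>V. (\<Sum>w\<in>V. M u w * x w) = c * x u))"

definition lap_max_eig :: "'v set \<Rightarrow> ('v \<Rightarrow> 'v \<Rightarrow> bool) \<Rightarrow> real" where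
  "lap_max_eig V E = Max {c. mat_eigenvalue V (laplacian V E) c}"

end

theory Submission
  imports Defs "Jordan_Normal_Form.Char_Poly" "HOL-Computational_Algebra.Squarefree"
begin

text \<open>Every ideal of \<open>\<int>\<^sub>n\<close> is \<open>d\<int>\<^sub>n\<close> for a unique \<open>d dvd n\<close>, and
  \<open>d\<int>\<^sub>n + e\<int>\<^sub>n = gcd d e \<int>\<^sub>n\<close>, so the essential ideal graph is the graph on the
  nontrivial divisors of \<open>n\<close> in which \<open>d\<close> and \<open>e\<close> are adjacent iff \<open>gcd d e \<int>\<^sub>n\<close> is
  essential. Every Laplacian eigenvalue of a simple graph on \<open>N\<close> vertices is at most \<open>N\<close>;
  the value \<open>N\<close> is attained if some vertex is adjacent to all others, and is not attained if
  the complement graph has diameter at most 2. If \<open>q\<^sup>2 dvd n\<close> for a prime \<open>q\<close>, then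
  \<open>q\<int>\<^sub>n\<close> is essential and \<open>q\<close> is such a vertex (this needs \<open>n \<noteq> q\<^sup>2\<close> to have a second
  vertex); for \<open>n = pq\<close> the graph is a single edge. If \<open>n\<close> is squarefree, only
  \<open>1\<int>\<^sub>n\<close> is essential, so adjacency is coprimality, and with at least three prime
  factors any two divisors are joined in the complement through a product of two primes.\<close>

section \<open>Laplacian spectra of simple graphs\<close>

definition simple_graph_on :: "'v set \<Rightarrow> ('v \<Rightarrow> 'v \<Rightarrow> bool) \<Rightarrow> bool" where
  "simple_graph_on V E \<longleftrightarrow> (\<forall>u\<in>V. \<not> E u u) \<and> (\<forall>u\<in>V. \<forall>w\<in>V. E u w \<longrightarrow> E w u)"

definition compl_adj :: "('v \<Rightarrow> 'v \<Rightarrow> bool) \<Rightarrow> 'v \<Rightarrow> 'v \<Rightarrow> bool" where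
  "compl_adj E u w \<longleftrightarrow> u \<noteq> w \<and> \<not> E u w"

lemma finite_mat_eigenvalues:
  assumes "finite V"
  shows "finite {c::real. mat_eigenvalue V M c}"
proof -
  obtain f where f: "bij_betw f {0..<card V} V"
    using ex_bij_betw_nat_finite[OF assms] by blast
  define N where "N = card V"
  define A :: "real mat" where "A = mat N N (\<lambda>(i, j). M (f i) (f j))"
  have A: "A \<in> carrier_mat N N" unfolding A_def by simp
  have "{c. mat_eigenvalue V M c} \<subseteq> {c. poly (char_poly A) c = 0}"
  proof
    fix c assume "c \<in> {c. mat_eigenvalue V M c}"
    then obtain x where x0: "\<exists>v\<in>V. x v \<noteq> 0" and ev: "\<forall>u\<in>V. (\<Sum>w\<in>V. M u w * x w) = c * x u"
      unfolding mat_eigenvalue_def by blast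
    define v where "v = vec N (\<lambda>i. x (f i))"
    have "v \<noteq> 0\<^sub>v N"
    proof
      assume "v = 0\<^sub>v N"
      from x0 obtain u where u: "u \<in> V" "x u \<noteq> 0" by blast
      then obtain i where "i < N" "f i = u" using f unfolding N_def bij_betw_def by force
      with \<open>v = 0\<^sub>v N\<close> u show False unfolding v_def by (metis index_vec index_zero_vec(1))
    qed
    moreover have "A *\<^sub>v v = c \<cdot>\<^sub>v v"
    proof (rule eq_vecI)
      fix i assume "i < dim_vec (c \<cdot>\<^sub>v v)"
      then have i: "i < N" unfolding v_def by simp
      have "(A *\<^sub>v v) $ i = (\<Sum>j\<in>{0..<N}. M (f i) (f j) * x (f j))"
        using i unfolding A_def v_def by (simp add: mult_mat_vec_def scalar_prod_def)
      also have "\<dots> = (\<Sum>w\<in>V. M (f i) w * x w)"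
        using sum.reindex_bij_betw[OF f, of "\<lambda>w. M (f i) w * x w"] unfolding N_def by simp
      also have "\<dots> = c * x (f i)"
        using ev f i unfolding N_def bij_betw_def by auto
      finally show "(A *\<^sub>v v) $ i = (c \<cdot>\<^sub>v v) $ i" using i unfolding v_def by simp
    qed (simp add: A_def v_def)
    moreover have "v \<in> carrier_vec N" unfolding v_def by simp
    ultimately have "eigenvalue A c"
      unfolding eigenvalue_def eigenvector_def using A by blast
    then show "c \<in> {c. poly (char_poly A) c = 0}"
      using eigenvalue_root_char_poly[OF A] by simp
  qed
  moreover have "char_poly A \<noteq> 0" using degree_monic_char_poly[OF A] by auto
  ultimately show ?thesis using poly_roots_finite finite_subset by blast
qed

lemma laplacian_mult_eq:
  assumes "finite V" "simple_graph_on V E" "u \<in> V"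
  shows "(\<Sum>w\<in>V. laplacian V E u w * x w) =
     real (card V) * x u - (\<Sum>w\<in>V. x w) + (\<Sum>w\<in>{w\<in>V. compl_adj E u w}. x w - x u)"
proof -
  define N where "N = {w\<in>V. E u w}"
  define C where "C = {w\<in>V. compl_adj E u w}"
  have V: "V = insert u (N \<union> C)" and disj: "u \<notin> N \<union> C" "N \<inter> C = {}"
    using assms(2,3) unfolding N_def C_def simple_graph_on_def compl_adj_def by auto
  have fin: "finite N" "finite C" using assms(1) unfolding N_def C_def by auto
  have "(\<Sum>w\<in>V. laplacian V E u w * x w) =
      (\<Sum>w\<in>V. (if u = w then real (card N) * x w else 0) - (if E u w then x w else 0))"
    unfolding laplacian_def N_def by (intro sum.cong) (auto simp: algebra_simps)
  also have "\<dots> = real (card N) * x u - (\<Sum>w\<in>N. x w)"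
    using assms(1,3) by (simp add: sum_subtractf N_def sum.If_cases Int_def)
  also have "\<dots> = real (card V) * x u - (\<Sum>w\<in>V. x w) + (\<Sum>w\<in>C. x w - x u)"
    using V disj fin by (simp add: card_Un_disjoint sum.union_disjoint sum_subtractf algebra_simps)
  finally show ?thesis unfolding C_def .
qed

lemma sum_symmetric_swap:
  fixes f :: "'v \<Rightarrow> 'v \<Rightarrow> real"
  assumes "finite V" "\<forall>u\<in>V. \<forall>w\<in>V. R u w \<longrightarrow> R w u"
  shows "(\<Sum>u\<in>V. \<Sum>w\<in>{w\<in>V. R u w}. f u w) = (\<Sum>u\<in>V. \<Sum>w\<in>{w\<in>V. R u w}. f w u)"
proof -
  have "(\<Sum>u\<in>V. \<Sum>w\<in>{w\<in>V. R u w}. f u w) = (\<Sum>u\<in>V. \<Sum>w\<in>V. if R u w then f u w else 0)"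
    using assms(1) by (simp add: sum.If_cases Int_def)
  also have "\<dots> = (\<Sum>w\<in>V. \<Sum>u\<in>V. if R w u then f u w else 0)"
    using assms by (subst sum.swap) (intro sum.cong refl; auto)
  also have "\<dots> = (\<Sum>u\<in>V. \<Sum>w\<in>{w\<in>V. R u w}. f w u)"
    using assms(1) by (simp add: sum.If_cases Int_def)
  finally show ?thesis .
qed

lemma sum_symmetric_diff_eq_0:
  fixes x :: "'v \<Rightarrow> real"
  assumes "finite V" "\<forall>u\<in>V. \<forall>w\<in>V. R u w \<longrightarrow> R w u"
  shows "(\<Sum>u\<in>V. \<Sum>w\<in>{w\<in>V. R u w}. x w - x u) = 0"
proof -
  have "(\<Sum>u\<in>V. \<Sum>w\<in>{w\<in>V. R u w}. x w - x u) = (\<Sum>u\<in>V. \<Sum>w\<in>{w\<in>V. R u w}. x u - x w)"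
    using sum_symmetric_swap[OF assms] .
  also have "\<dots> = - (\<Sum>u\<in>V. \<Sum>w\<in>{w\<in>V. R u w}. x w - x u)"
    by (simp add: sum_negf[symmetric])
  finally show ?thesis by simp
qed

lemma sum_symmetric_form_nonpos:
  fixes x :: "'v \<Rightarrow> real"
  assumes "finite V" "\<forall>u\<in>V. \<forall>w\<in>V. R u w \<longrightarrow> R w u"
  shows "(\<Sum>u\<in>V. \<Sum>w\<in>{w\<in>V. R u w}. (x w - x u) * x u) \<le> 0"
proof -
  let ?Q = "\<Sum>u\<in>V. \<Sum>w\<in>{w\<in>V. R u w}. (x w - x u) * x u"
  have "?Q = (\<Sum>u\<in>V. \<Sum>w\<in>{w\<in>V. R u w}. (x u - x w) * x w)"
    using sum_symmetric_swap[OF assms] .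
  then have "2 * ?Q = (\<Sum>u\<in>V. \<Sum>w\<in>{w\<in>V. R u w}. (x w - x u) * x u + (x u - x w) * x w)"
    by (simp add: sum.distrib)
  also have "\<dots> = (\<Sum>u\<in>V. \<Sum>w\<in>{w\<in>V. R u w}. - ((x w - x u)\<^sup>2))"
    by (intro sum.cong refl) (simp add: power2_eq_square algebra_simps)
  also have "\<dots> \<le> 0" by (intro sum_nonpos) simp
  finally show ?thesis by simp
qed

text \<open>For an eigenvector \<open>x\<close>, \<open>(|V| - c) \<parallel>x\<parallel>\<^sup>2 = (\<Sum>x)\<^sup>2 + x\<^sup>T L' x\<close> with \<open>L'\<close> the
  Laplacian of the complement graph, and both summands are nonnegative.\<close>
lemma mat_eigenvalue_laplacian_le_card:
  assumes fin: "finite V" and G: "simple_graph_on V E"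
    and ev: "mat_eigenvalue V (laplacian V E) c"
  shows "c \<le> real (card V)"
proof -
  obtain x where x0: "\<exists>v\<in>V. x v \<noteq> 0"
    and e: "\<forall>u\<in>V. (\<Sum>w\<in>V. laplacian V E u w * x w) = c * x u"
    using ev unfolding mat_eigenvalue_def by blast
  have sym: "\<forall>u\<in>V. \<forall>w\<in>V. compl_adj E u w \<longrightarrow> compl_adj E w u"
    using G unfolding simple_graph_on_def compl_adj_def by auto
  define s where "s = (\<Sum>w\<in>V. x w)"
  define Q where "Q = (\<Sum>u\<in>V. \<Sum>w\<in>{w\<in>V. compl_adj E u w}. (x w - x u) * x u)"
  have "(real (card V) - c) * (\<Sum>u\<in>V. (x u)\<^sup>2)
      = (\<Sum>u\<in>V. (s - (\<Sum>w\<in>{w\<in>V. compl_adj E u w}. x w - x u)) * x u)"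
    unfolding sum_distrib_left
  proof (intro sum.cong refl)
    fix u assume u: "u \<in> V"
    have "(real (card V) - c) * x u = s - (\<Sum>w\<in>{w\<in>V. compl_adj E u w}. x w - x u)"
      using laplacian_mult_eq[OF fin G u, of x] e u by (simp add: s_def algebra_simps)
    then show "(real (card V) - c) * (x u)\<^sup>2 = (s - (\<Sum>w\<in>{w\<in>V. compl_adj E u w}. x w - x u)) * x u"
      by (metis mult.assoc power2_eq_square)
  qed
  also have "\<dots> = s * s - Q"
    by (simp add: Q_def s_def left_diff_distrib sum_subtractf sum_distrib_left[symmetric]
        sum_distrib_right[symmetric] mult.assoc)
  finally have eq: "(real (card V) - c) * (\<Sum>u\<in>V. (x u)\<^sup>2) = s * s - Q" .
  have "Q \<le> 0" unfolding Q_def by (rule sum_symmetric_form_nonpos[OF fin sym])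
  then have "(real (card V) - c) * (\<Sum>u\<in>V. (x u)\<^sup>2) \<ge> 0"
    using eq zero_le_square[of s] by linarith
  moreover have "(\<Sum>u\<in>V. (x u)\<^sup>2) > 0"
  proof -
    obtain v where "v \<in> V" "x v \<noteq> 0" using x0 by blast
    then show ?thesis using fin by (intro sum_pos2[of V v]) auto
  qed
  ultimately show ?thesis by (simp add: zero_le_mult_iff)
qed

lemma mat_eigenvalue_laplacian_0:
  assumes "finite V" "simple_graph_on V E" "V \<noteq> {}"
  shows "mat_eigenvalue V (laplacian V E) 0"
  unfolding mat_eigenvalue_def
proof (intro exI[of _ "\<lambda>_. 1"] conjI ballI)
  show "\<exists>v\<in>V. (1::real) \<noteq> 0" using assms(3) by auto
  fix u assume "u \<in> V"
  then show "(\<Sum>w\<in>V. laplacian V E u w * 1) = 0 * 1"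
    using laplacian_mult_eq[OF assms(1,2), of u "\<lambda>_. 1"] assms(1) by simp
qed

text \<open>The eigenvector is \<open>|V| e\<^sub>v - 1\<close>; it works because \<open>v\<close> is isolated in the
  complement graph.\<close>
lemma mat_eigenvalue_laplacian_card_if_dominating:
  assumes fin: "finite V" and G: "simple_graph_on V E"
    and v: "v \<in> V" and w: "w \<in> V" "w \<noteq> v" and dom: "\<forall>u\<in>V. u \<noteq> v \<longrightarrow> E v u"
  shows "mat_eigenvalue V (laplacian V E) (real (card V))"
proof -
  define x where "x = (\<lambda>u. if u = v then real (card V) - 1 else -1)"
  have "(\<Sum>u\<in>V. x u) = x v + (\<Sum>u\<in>V - {v}. x u)"
    using fin v by (rule sum.remove)
  also have "(\<Sum>u\<in>V - {v}. x u) = (\<Sum>u\<in>V - {v}. -1)"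
    by (intro sum.cong) (auto simp: x_def)
  also have "x v + \<dots> = 0"
  proof -
    have "card V \<ge> 1" using fin v by (auto simp: Suc_le_eq card_gt_0_iff)
    then show ?thesis using fin v by (simp add: x_def card_Diff_singleton of_nat_diff)
  qed
  finally have s: "(\<Sum>u\<in>V. x u) = 0" .
  have "card {v, w} \<le> card V" using v w fin by (intro card_mono) auto
  then have "x v \<noteq> 0" using w by (simp add: x_def)
  show ?thesis unfolding mat_eigenvalue_def
  proof (intro exI[of _ x] conjI ballI)
    show "\<exists>v\<in>V. x v \<noteq> 0" using \<open>x v \<noteq> 0\<close> v by blast
    fix u assume u: "u \<in> V"
    have "(\<Sum>w\<in>{w\<in>V. compl_adj E u w}. x w - x u) = 0"
    proof (rule sum.neutral, intro ballI)
      fix w assume w: "w \<in> {w\<in>V. compl_adj E u w}"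
      have "E v z" if "z \<in> V" "z \<noteq> v" for z using dom that by blast
      moreover have "E z v" if "z \<in> V" "z \<noteq> v" for z
        using G dom v that unfolding simple_graph_on_def by blast
      ultimately have "u \<noteq> v" "w \<noteq> v" using w u unfolding compl_adj_def by auto
      then show "x w - x u = 0" unfolding x_def by simp
    qed
    then show "(\<Sum>w\<in>V. laplacian V E u w * x w) = real (card V) * x u"
      using laplacian_mult_eq[OF fin G u, of x] s by simp
  qed
qed

lemma laplacian_card_eigenvector_sums:
  assumes fin: "finite V" and G: "simple_graph_on V E"
    and e: "\<forall>u\<in>V. (\<Sum>w\<in>V. laplacian V E u w * x w) = real (card V) * x u"
  shows "(\<Sum>w\<in>V. x w) = 0"
    and "u \<in> V \<Longrightarrow> (\<Sum>w\<in>{w\<in>V. compl_adj E u w}. x w - x u) = 0"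
proof -
  have sym: "\<forall>u\<in>V. \<forall>w\<in>V. compl_adj E u w \<longrightarrow> compl_adj E w u"
    using G unfolding simple_graph_on_def compl_adj_def by auto
  have local: "(\<Sum>w\<in>{w\<in>V. compl_adj E u w}. x w - x u) = (\<Sum>w\<in>V. x w)" if "u \<in> V" for u
    using laplacian_mult_eq[OF fin G that, of x] e that by simp
  then have "real (card V) * (\<Sum>w\<in>V. x w) = 0"
    using sum_symmetric_diff_eq_0[OF fin sym, of x] by simp
  then show s0: "(\<Sum>w\<in>V. x w) = 0" using fin by (cases "V = {}") simp_all
  show "u \<in> V \<Longrightarrow> (\<Sum>w\<in>{w\<in>V. compl_adj E u w}. x w - x u) = 0" using local s0 by simp
qed

text \<open>If the complement graph has diameter at most 2, an eigenvector for \<open>|V|\<close> would be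
  constant on the complement neighbourhood of any maximum point, hence constant, hence zero since
  its entries sum to zero.\<close>
lemma not_mat_eigenvalue_laplacian_card:
  assumes fin: "finite V" and G: "simple_graph_on V E"
    and diam: "\<forall>u\<in>V. \<forall>w\<in>V. u \<noteq> w \<longrightarrow>
        compl_adj E u w \<or> (\<exists>y\<in>V. compl_adj E u y \<and> compl_adj E y w)"
  shows "\<not> mat_eigenvalue V (laplacian V E) (real (card V))"
proof
  assume "mat_eigenvalue V (laplacian V E) (real (card V))"
  then obtain x where x0: "\<exists>v\<in>V. x v \<noteq> 0"
    and e: "\<forall>u\<in>V. (\<Sum>w\<in>V. laplacian V E u w * x w) = real (card V) * x u"
    unfolding mat_eigenvalue_def by blast
  note sums = laplacian_card_eigenvector_sums[OF fin G e]
  have ne: "V \<noteq> {}" using x0 by auto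
  define M where "M = Max (x ` V)"
  have le_M: "x u \<le> M" if "u \<in> V" for u unfolding M_def using fin that by simp
  have "M \<in> x ` V" unfolding M_def using fin ne by simp
  then obtain u0 where u0: "u0 \<in> V" "x u0 = M" by blast
  have max_spreads: "x w = M" if "u \<in> V" "x u = M" "w \<in> V" "compl_adj E u w" for u w
  proof -
    have "(\<Sum>w\<in>{w\<in>V. compl_adj E u w}. x u - x w) = 0"
      using sums(2)[OF that(1)] by (simp add: sum_subtractf)
    moreover have "\<forall>w\<in>{w\<in>V. compl_adj E u w}. x u - x w \<ge> 0" using le_M that by auto
    ultimately have "\<forall>w\<in>{w\<in>V. compl_adj E u w}. x u - x w = 0"
      using fin sum_nonneg_eq_0_iff[of "{w\<in>V. compl_adj E u w}" "\<lambda>w. x u - x w"] by auto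
    then show ?thesis using that by auto
  qed
  have all_M: "x w = M" if w: "w \<in> V" for w
  proof (cases "w = u0")
    case False
    then have "compl_adj E u0 w \<or> (\<exists>y\<in>V. compl_adj E u0 y \<and> compl_adj E y w)"
      using diam u0(1) w False by (metis (full_types))
    then show ?thesis
    proof
      assume "\<exists>y\<in>V. compl_adj E u0 y \<and> compl_adj E y w"
      then obtain y where y: "y \<in> V" "compl_adj E u0 y" "compl_adj E y w" by blast
      then have "x y = M" by (intro max_spreads[OF u0])
      then show ?thesis by (rule max_spreads[OF y(1) _ w y(3)])
    qed (rule max_spreads[OF u0 w])
  qed (use u0 in simp)
  then have "real (card V) * M = 0" using sums(1) by simp
  then have "M = 0" using fin ne by simp
  then show False using x0 all_M by auto
qed

lemma lap_max_eig_le_card: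
  assumes "finite V" "simple_graph_on V E" "V \<noteq> {}"
  shows "lap_max_eig V E \<le> real (card V)"
    and "lap_max_eig V E = real (card V) \<longleftrightarrow> mat_eigenvalue V (laplacian V E) (real (card V))"
proof -
  let ?S = "{c. mat_eigenvalue V (laplacian V E) c}"
  have "finite ?S" "?S \<noteq> {}"
    using finite_mat_eigenvalues mat_eigenvalue_laplacian_0 assms by blast+
  then have max: "lap_max_eig V E \<in> ?S" "\<And>c. c \<in> ?S \<Longrightarrow> c \<le> lap_max_eig V E"
    unfolding lap_max_eig_def using Max_in Max_ge by blast+
  moreover have "\<And>c. c \<in> ?S \<Longrightarrow> c \<le> real (card V)"
    using mat_eigenvalue_laplacian_le_card assms(1,2) by blast
  ultimately show "lap_max_eig V E \<le> real (card V)"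
    and "lap_max_eig V E = real (card V) \<longleftrightarrow> mat_eigenvalue V (laplacian V E) (real (card V))"
    by (auto intro: order.antisym)
qed

lemma laplacian_bij_betw:
  assumes f: "bij_betw f D V" and adj: "\<And>a b. a \<in> D \<Longrightarrow> b \<in> D \<Longrightarrow> E (f a) (f b) \<longleftrightarrow> E' a b"
    and ab: "a \<in> D" "b \<in> D"
  shows "laplacian V E (f a) (f b) = laplacian D E' a b"
proof -
  have "{x\<in>V. E (f a) x} = f ` {y\<in>D. E' a y}"
    using f adj ab unfolding bij_betw_def by auto
  moreover have "inj_on f {y\<in>D. E' a y}"
    using f unfolding bij_betw_def by (auto intro: inj_on_subset)
  ultimately have "card {x\<in>V. E (f a) x} = card {y\<in>D. E' a y}" by (simp add: card_image)
  moreover have "f a = f b \<longleftrightarrow> a = b"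
    using f ab unfolding bij_betw_def by (auto dest: inj_onD)
  ultimately show ?thesis unfolding laplacian_def using adj ab by (cases "a = b") simp_all
qed

lemma mat_eigenvalue_laplacian_bij_betw:
  assumes f: "bij_betw f D V" and adj: "\<And>a b. a \<in> D \<Longrightarrow> b \<in> D \<Longrightarrow> E (f a) (f b) \<longleftrightarrow> E' a b"
    and ev: "mat_eigenvalue D (laplacian D E') c"
  shows "mat_eigenvalue V (laplacian V E) c"
proof -
  obtain x where x0: "\<exists>a\<in>D. x a \<noteq> 0"
    and e: "\<forall>a\<in>D. (\<Sum>b\<in>D. laplacian D E' a b * x b) = c * x a"
    using ev unfolding mat_eigenvalue_def by blast
  define y where "y = x \<circ> inv_into D f"
  have y: "y (f a) = x a" if "a \<in> D" for a
    using f that unfolding y_def bij_betw_def by simp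
  show ?thesis unfolding mat_eigenvalue_def
  proof (intro exI[of _ y] conjI ballI)
    show "\<exists>v\<in>V. y v \<noteq> 0" using x0 y f unfolding bij_betw_def by force
    fix u assume "u \<in> V"
    then obtain a where a: "a \<in> D" "u = f a" using f unfolding bij_betw_def by blast
    have "(\<Sum>w\<in>V. laplacian V E u w * y w) = (\<Sum>b\<in>D. laplacian V E (f a) (f b) * y (f b))"
      using sum.reindex_bij_betw[OF f, of "\<lambda>w. laplacian V E u w * y w"] a by simp
    also have "\<dots> = (\<Sum>b\<in>D. laplacian D E' a b * x b)"
      using laplacian_bij_betw[where E = E and E' = E', OF f adj a(1)] y by (intro sum.cong) auto
    finally show "(\<Sum>w\<in>V. laplacian V E u w * y w) = c * y u" using e a y by simp
  qed
qed

lemma lap_max_eig_bij_betw: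
  assumes f: "bij_betw f D V" and adj: "\<And>a b. a \<in> D \<Longrightarrow> b \<in> D \<Longrightarrow> E (f a) (f b) \<longleftrightarrow> E' a b"
  shows "lap_max_eig V E = lap_max_eig D E'"
proof -
  let ?g = "inv_into D f"
  have g: "bij_betw ?g V D" using f by (rule bij_betw_inv_into)
  have "E' (?g u) (?g w) \<longleftrightarrow> E u w" if "u \<in> V" "w \<in> V" for u w
    using adj[of "?g u" "?g w"] g f that unfolding bij_betw_def
    by (auto simp: f_inv_into_f)
  then have "{c. mat_eigenvalue V (laplacian V E) c} = {c. mat_eigenvalue D (laplacian D E') c}"
    using mat_eigenvalue_laplacian_bij_betw[where E = E and E' = E', OF f adj]
      mat_eigenvalue_laplacian_bij_betw[where E = E' and E' = E, OF g]
    by blast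
  then show ?thesis unfolding lap_max_eig_def by simp
qed

section \<open>Ideals of \<open>\<int>\<^sub>m\<close>\<close>

definition divisor_ideal :: "int \<Rightarrow> int \<Rightarrow> int set" where
  "divisor_ideal m d = {x\<in>{0..m - 1}. d dvd x}"

context residues
begin

lemma divisor_ideal_eq_cgenideal:
  assumes "0 < d" "d dvd m"
  shows "divisor_ideal m d = PIdl (d mod m)"
proof -
  have "y \<in> PIdl (d mod m) \<longleftrightarrow> y \<in> {0..m - 1} \<and> d dvd y" for y
  proof
    assume "y \<in> PIdl (d mod m)"
    then obtain x where "x \<in> carrier R" "y = x \<otimes> (d mod m)" unfolding cgenideal_def by blast
    then show "y \<in> {0..m - 1} \<and> d dvd y"
      using assms m_gt_one by (simp add: res_mult_eq mod_simps dvd_mod)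
  next
    assume y: "y \<in> {0..m - 1} \<and> d dvd y"
    then obtain t where "y = t * d" by (metis dvdE mult.commute)
    then have "y = (t mod m) \<otimes> (d mod m)" using y by (simp add: res_mult_eq mod_simps)
    then show "y \<in> PIdl (d mod m)" unfolding cgenideal_def by blast
  qed
  then show ?thesis unfolding divisor_ideal_def by blast
qed

lemma ideal_divisor_ideal:
  assumes "0 < d" "d dvd m"
  shows "ideal (divisor_ideal m d) R"
  using divisor_ideal_eq_cgenideal[OF assms] cring.cgenideal_ideal[OF cring] by simp

lemma ideal_lincomb_mod:
  assumes "ideal I R" "x \<in> I" "y \<in> I"
  shows "(s * x + t * y) mod m \<in> I"
proof -
  interpret ideal I R by fact
  have "(s mod m) \<otimes> x \<oplus> (t mod m) \<otimes> y \<in> I"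
    using assms(2,3) by (simp add: I_l_closed a_closed)
  then show ?thesis by (simp add: res_mult_eq res_add_eq mod_simps)
qed

lemma divisor_ideal_self: "divisor_ideal m m = {\<zero>}"
  unfolding divisor_ideal_def res_zero_eq using m_gt_one zdvd_imp_le by fastforce

text \<open>The remainders modulo \<open>d\<close> of the elements of \<open>I\<close> and of \<open>m\<close> lie again in \<open>I\<close>,
  hence vanish by minimality of \<open>d\<close>.\<close>
lemma ideal_eq_divisor_ideal_of_least:
  assumes I: "ideal I R" and d: "d \<in> I" "0 < d" and least: "\<And>x. x \<in> I \<Longrightarrow> 0 < x \<Longrightarrow> d \<le> x"
  shows "d dvd m" "I = divisor_ideal m d"
proof -
  have I_carrier: "I \<subseteq> {0..m - 1}" using ideal.Icarr[OF I] res_carrier_eq by blast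
  have "0 \<in> I" using additive_subgroup.zero_closed[OF ideal.axioms(1)[OF I]] res_zero_eq by simp
  have "d < m" using d I_carrier by force
  have mod_in_I: "(x - t * d) mod m \<in> I" if "x \<in> I" for x t
    using ideal_lincomb_mod[OF I that d(1), of 1 "- t"] by simp
  have remainder_0: "r = 0" if "r \<in> {0..<d}" "(x - t * d) mod m = r" "x \<in> I" for r x t
    using least[of r] mod_in_I[OF that(3)] that(1,2) by fastforce
  have mod_d_bounds: "x mod d \<in> {0..<d}" "x mod d < m" for x
  proof -
    show "x mod d \<in> {0..<d}" using d by simp
    then show "x mod d < m" using \<open>d < m\<close> by simp
  qed
  have dvd_I: "d dvd x" if "x \<in> I" for x
  proof -
    have "(x - x div d * d) mod m = x mod d"
      unfolding minus_div_mult_eq_mod using mod_d_bounds[of x]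
      by (intro mod_pos_pos_trivial) simp_all
    then have "x mod d = 0" using remainder_0[OF mod_d_bounds(1) _ that] by blast
    then show ?thesis by (simp add: dvd_eq_mod_eq_0)
  qed
  have "0 - m div d * d = m mod d - m" using div_mult_mod_eq[of m d] by linarith
  then have "(0 - m div d * d) mod m = m mod d"
    using mod_pos_pos_trivial[of "m mod d" m] mod_d_bounds[of m] by simp
  then have "m mod d = 0" using remainder_0[OF mod_d_bounds(1) _ \<open>0 \<in> I\<close>] by blast
  then show "d dvd m" by (simp add: dvd_eq_mod_eq_0)
  show "I = divisor_ideal m d"
  proof
    show "I \<subseteq> divisor_ideal m d" using I_carrier dvd_I unfolding divisor_ideal_def by auto
    show "divisor_ideal m d \<subseteq> I"
    proof
      fix y assume "y \<in> divisor_ideal m d"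
      then have y: "0 \<le> y" "y < m" "d dvd y" unfolding divisor_ideal_def by auto
      then obtain t where "y = t * d" by (metis dvdE mult.commute)
      then have "(0 - (- t) * d) mod m = y" using y(1,2) by simp
      then show "y \<in> I" using mod_in_I[OF \<open>0 \<in> I\<close>] by metis
    qed
  qed
qed

lemma ideal_eq_divisor_ideal:
  assumes I: "ideal I R"
  obtains d where "0 < d" "d dvd m" "I = divisor_ideal m d"
proof (cases "I = {\<zero>}")
  case True
  then show ?thesis using that[of m] divisor_ideal_self m_gt_one by simp
next
  case False
  have "I \<subseteq> {0..m - 1}" "\<zero> \<in> I"
    using ideal.Icarr[OF I] res_carrier_eq additive_subgroup.zero_closed[OF ideal.axioms(1)[OF I]]
    by blast+
  with False obtain a where "a \<in> I" "a > 0" unfolding res_zero_eq by fastforce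
  define d where "d = int (LEAST k::nat. int k \<in> I \<and> 0 < k)"
  have "int (LEAST k::nat. int k \<in> I \<and> 0 < k) \<in> I \<and> 0 < (LEAST k::nat. int k \<in> I \<and> 0 < k)"
    by (rule LeastI[of _ "nat a"]) (use \<open>a \<in> I\<close> \<open>a > 0\<close> in simp)
  then have d: "d \<in> I" "0 < d" unfolding d_def by simp_all
  have "d \<le> x" if "x \<in> I" "0 < x" for x
    unfolding d_def using Least_le[of "\<lambda>k. int k \<in> I \<and> 0 < k" "nat x"] that by simp
  then show ?thesis using ideal_eq_divisor_ideal_of_least[OF I d] that d by blast
qed

lemma divisor_ideal_subset_iff:
  assumes "0 < d" "d dvd m" "0 < e" "e dvd m"
  shows "divisor_ideal m d \<subseteq> divisor_ideal m e \<longleftrightarrow> e dvd d"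
proof
  assume sub: "divisor_ideal m d \<subseteq> divisor_ideal m e"
  show "e dvd d"
  proof (cases "d = m")
    case False
    then have "d \<in> divisor_ideal m d"
      using assms m_gt_one zdvd_imp_le[of d m] unfolding divisor_ideal_def by auto
    then show ?thesis using sub unfolding divisor_ideal_def by auto
  qed (use assms in simp)
qed (auto simp: divisor_ideal_def intro: dvd_trans)

lemma divisor_ideal_eq_iff:
  assumes "0 < d" "d dvd m" "0 < e" "e dvd m"
  shows "divisor_ideal m d = divisor_ideal m e \<longleftrightarrow> d = e"
  using divisor_ideal_subset_iff[OF assms] divisor_ideal_subset_iff[OF assms(3,4,1,2)] assms
  by (auto simp: zdvd_antisym_nonneg)

lemma divisor_ideal_1: "divisor_ideal m 1 = carrier R"
  unfolding divisor_ideal_def res_carrier_eq by auto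

lemma divisor_ideal_Int: "divisor_ideal m d \<inter> divisor_ideal m e = divisor_ideal m (lcm d e)"
  unfolding divisor_ideal_def by auto

lemma divisor_ideal_add:
  assumes d: "0 < d" "d dvd m" and e: "0 < e" "e dvd m"
  shows "divisor_ideal m d <+>\<^bsub>R\<^esub> divisor_ideal m e = divisor_ideal m (gcd d e)"
proof -
  interpret cring R by (rule cring)
  have ideals: "ideal (divisor_ideal m d) R" "ideal (divisor_ideal m e) R"
    using ideal_divisor_ideal d e by auto
  have g: "0 < gcd d e" "gcd d e dvd m" using d e by auto
  obtain g' where g': "0 < g'" "g' dvd m"
    "divisor_ideal m d <+>\<^bsub>R\<^esub> divisor_ideal m e = divisor_ideal m g'"
    using ideal_eq_divisor_ideal[OF add_ideals[OF ideals]] by blast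
  have "divisor_ideal m d \<union> divisor_ideal m e \<subseteq> divisor_ideal m d <+>\<^bsub>R\<^esub> divisor_ideal m e"
    using union_genideal[OF ideals] genideal_self[of "divisor_ideal m d \<union> divisor_ideal m e"] ideals
    by (auto dest: ideal.Icarr)
  then have "g' dvd gcd d e"
    using g' divisor_ideal_subset_iff[OF d g'(1,2)] divisor_ideal_subset_iff[OF e g'(1,2)] by simp
  then have "divisor_ideal m (gcd d e) \<subseteq> divisor_ideal m g'"
    using divisor_ideal_subset_iff[OF g g'(1,2)] by simp
  moreover have "divisor_ideal m d \<union> divisor_ideal m e \<subseteq> divisor_ideal m (gcd d e)"
    unfolding divisor_ideal_def by auto
  then have "Idl (divisor_ideal m d \<union> divisor_ideal m e) \<subseteq> divisor_ideal m (gcd d e)"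
    using genideal_minimal[OF ideal_divisor_ideal[OF g]] by blast
  then have "divisor_ideal m g' \<subseteq> divisor_ideal m (gcd d e)"
    using union_genideal[OF ideals] g' by simp
  ultimately show ?thesis using g' by auto
qed

lemma divisor_ideal_eq_zero_iff:
  assumes "0 < d" "d dvd m"
  shows "divisor_ideal m d = {\<zero>} \<longleftrightarrow> d = m"
  using divisor_ideal_eq_iff[OF assms, of m] divisor_ideal_self m_gt_one by simp

lemma divisor_ideal_eq_carrier_iff:
  assumes "0 < d" "d dvd m"
  shows "divisor_ideal m d = carrier R \<longleftrightarrow> d = 1"
  using divisor_ideal_eq_iff[OF assms, of 1] divisor_ideal_1 by simp

lemma ideal_nonzero_iff:
  "ideal L R \<and> L \<noteq> {\<zero>} \<longleftrightarrow> (\<exists>e. 0 < e \<and> e dvd m \<and> e \<noteq> m \<and> L = divisor_ideal m e)"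
proof
  assume L: "ideal L R \<and> L \<noteq> {\<zero>}"
  then obtain e where "0 < e" "e dvd m" "L = divisor_ideal m e"
    using ideal_eq_divisor_ideal by blast
  with L show "\<exists>e. 0 < e \<and> e dvd m \<and> e \<noteq> m \<and> L = divisor_ideal m e"
    using divisor_ideal_eq_zero_iff by blast
qed (use ideal_divisor_ideal divisor_ideal_eq_zero_iff in blast)

lemma essential_divisor_ideal_iff:
  assumes g: "0 < g" "g dvd m"
  shows "essential_ideal R (divisor_ideal m g) \<longleftrightarrow> (\<forall>e>0. e dvd m \<and> e \<noteq> m \<longrightarrow> lcm g e \<noteq> m)"
proof -
  have "essential_ideal R (divisor_ideal m g) \<longleftrightarrow>
      (\<forall>e. 0 < e \<and> e dvd m \<and> e \<noteq> m \<longrightarrow> divisor_ideal m g \<inter> divisor_ideal m e \<noteq> {\<zero>})"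
    unfolding essential_ideal_def ideal_nonzero_iff using ideal_divisor_ideal[OF g] by blast
  also have "\<dots> \<longleftrightarrow> (\<forall>e. 0 < e \<and> e dvd m \<and> e \<noteq> m \<longrightarrow> divisor_ideal m (lcm g e) \<noteq> {\<zero>})"
    by (simp only: divisor_ideal_Int)
  also have "\<dots> \<longleftrightarrow> (\<forall>e>0. e dvd m \<and> e \<noteq> m \<longrightarrow> lcm g e \<noteq> m)"
  proof -
    have "divisor_ideal m (lcm g e) = {\<zero>} \<longleftrightarrow> lcm g e = m" if "0 < e" "e dvd m" for e
      using divisor_ideal_eq_zero_iff[of "lcm g e"] g that by (simp add: lcm_pos_int)
    then show ?thesis by blast
  qed
  finally show ?thesis .
qed

lemma eig_vertices_eq:
  "eig_vertices R = divisor_ideal m ` {d. 0 < d \<and> d dvd m \<and> d \<noteq> 1 \<and> d \<noteq> m}"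
proof -
  have "ideal I R \<and> I \<noteq> {\<zero>} \<and> I \<noteq> carrier R \<longleftrightarrow>
      (\<exists>d. 0 < d \<and> d dvd m \<and> d \<noteq> 1 \<and> d \<noteq> m \<and> I = divisor_ideal m d)" for I
  proof
    assume I: "ideal I R \<and> I \<noteq> {\<zero>} \<and> I \<noteq> carrier R"
    then obtain d where "0 < d" "d dvd m" "I = divisor_ideal m d"
      using ideal_eq_divisor_ideal by blast
    with I show "\<exists>d. 0 < d \<and> d dvd m \<and> d \<noteq> 1 \<and> d \<noteq> m \<and> I = divisor_ideal m d"
      using divisor_ideal_eq_zero_iff divisor_ideal_eq_carrier_iff by blast
  qed (use ideal_divisor_ideal divisor_ideal_eq_zero_iff divisor_ideal_eq_carrier_iff in blast)
  then show ?thesis unfolding eig_vertices_def by blast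
qed

lemma eig_adj_divisor_ideal_iff:
  assumes "0 < d" "d dvd m" "0 < e" "e dvd m"
  shows "eig_adj R (divisor_ideal m d) (divisor_ideal m e) \<longleftrightarrow>
    d \<noteq> e \<and> (\<forall>g>0. g dvd m \<and> g \<noteq> m \<longrightarrow> lcm (gcd d e) g \<noteq> m)"
proof -
  have "0 < gcd d e" "gcd d e dvd m" using assms by auto
  then show ?thesis
    unfolding eig_adj_def divisor_ideal_add[OF assms] divisor_ideal_eq_iff[OF assms]
    using essential_divisor_ideal_iff by blast
qed

end

section \<open>The essential ideal graph of \<open>\<int>\<^sub>n\<close> as a divisor graph\<close>

definition nontrivial_divisors :: "nat \<Rightarrow> nat set" where
  "nontrivial_divisors n = {d. d dvd n \<and> d \<noteq> 1 \<and> d \<noteq> n}"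

definition essential_divisor :: "nat \<Rightarrow> nat \<Rightarrow> bool" where
  "essential_divisor n g \<longleftrightarrow> (\<forall>e. e dvd n \<and> e \<noteq> n \<longrightarrow> lcm g e \<noteq> n)"

definition divisor_adj :: "nat \<Rightarrow> nat \<Rightarrow> nat \<Rightarrow> bool" where
  "divisor_adj n a b \<longleftrightarrow> a \<noteq> b \<and> essential_divisor n (gcd a b)"

lemma int_nontrivial_divisors:
  "int ` nontrivial_divisors n = {d. 0 < d \<and> d dvd int n \<and> d \<noteq> 1 \<and> d \<noteq> int n}"
  if "n > 0"
proof
  show "int ` nontrivial_divisors n \<subseteq> {d. 0 < d \<and> d dvd int n \<and> d \<noteq> 1 \<and> d \<noteq> int n}"
  proof (rule image_subsetI)
    fix d assume "d \<in> nontrivial_divisors n"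
    then have "d dvd n" "d \<noteq> 1" "d \<noteq> n" unfolding nontrivial_divisors_def by simp_all
    moreover have "0 < d" using dvd_pos_nat[OF that \<open>d dvd n\<close>] .
    ultimately show "int d \<in> {d. 0 < d \<and> d dvd int n \<and> d \<noteq> 1 \<and> d \<noteq> int n}" by simp
  qed
  show "{d. 0 < d \<and> d dvd int n \<and> d \<noteq> 1 \<and> d \<noteq> int n} \<subseteq> int ` nontrivial_divisors n"
  proof
    fix d :: int assume d: "d \<in> {d. 0 < d \<and> d dvd int n \<and> d \<noteq> 1 \<and> d \<noteq> int n}"
    then have d_nat: "d = int (nat d)" by simp
    have "nat d \<in> nontrivial_divisors n"
      using d unfolding nontrivial_divisors_def by (auto simp: nat_dvd_iff nat_eq_iff)
    with d_nat show "d \<in> int ` nontrivial_divisors n" by blast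
  qed
qed

lemma all_pos_int_iff: "(\<forall>e::int>0. P e) \<longleftrightarrow> (\<forall>e::nat>0. P (int e))"
  by (auto elim: pos_int_cases)

lemma essential_divisor_int_iff:
  "(\<forall>e>0. e dvd int n \<and> e \<noteq> int n \<longrightarrow> lcm (int g) e \<noteq> int n) \<longleftrightarrow> essential_divisor n g"
  if "n > 0"
proof -
  have "(\<forall>e>0. e dvd int n \<and> e \<noteq> int n \<longrightarrow> lcm (int g) e \<noteq> int n) \<longleftrightarrow>
      (\<forall>e::nat>0. e dvd n \<and> e \<noteq> n \<longrightarrow> lcm g e \<noteq> n)"
    unfolding all_pos_int_iff by simp
  also have "\<dots> \<longleftrightarrow> essential_divisor n g"
    unfolding essential_divisor_def using dvd_pos_nat[OF that] by blast
  finally show ?thesis .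
qed

lemma lap_max_eig_essential_ideal_graph:
  assumes "n > 1"
  shows "lap_max_eig (eig_vertices (residue_ring (int n))) (eig_adj (residue_ring (int n))) =
    lap_max_eig (nontrivial_divisors n) (divisor_adj n)"
proof (rule lap_max_eig_bij_betw)
  have res: "residues (int n)" unfolding residues_def using assms by simp
  have pos: "0 < int d" "int d dvd int n" if "d \<in> nontrivial_divisors n" for d
  proof -
    have "int d \<in> int ` nontrivial_divisors n" using that by blast
    then show "0 < int d" "int d dvd int n" using int_nontrivial_divisors[of n] assms by auto
  qed
  let ?f = "\<lambda>d. divisor_ideal (int n) (int d)"
  show "bij_betw ?f (nontrivial_divisors n) (eig_vertices (residue_ring (int n)))"
    unfolding bij_betw_def
  proof
    show "inj_on ?f (nontrivial_divisors n)"
      using residues.divisor_ideal_eq_iff[OF res pos pos] by (auto intro: inj_onI)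
    have D: "int ` nontrivial_divisors n = {d. 0 < d \<and> d dvd int n \<and> d \<noteq> 1 \<and> d \<noteq> int n}"
      using int_nontrivial_divisors assms by simp
    show "?f ` nontrivial_divisors n = eig_vertices (residue_ring (int n))"
      by (simp only: residues.eig_vertices_eq[OF res] image_image flip: D)
  qed
  show "eig_adj (residue_ring (int n)) (?f a) (?f b) \<longleftrightarrow> divisor_adj n a b"
    if "a \<in> nontrivial_divisors n" "b \<in> nontrivial_divisors n" for a b
    unfolding residues.eig_adj_divisor_ideal_iff[OF res pos[OF that(1)] pos[OF that(2)]]
    using essential_divisor_int_iff[of n "gcd a b"] assms by (simp add: divisor_adj_def)
qed

section \<open>Divisors and prime power factorizations\<close>

lemma card_divisors_prime_power:
  assumes "prime (p::nat)"
  shows "card {d. d dvd p ^ e} = e + 1"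
proof -
  have "{d. d dvd p ^ e} = (\<lambda>i. p ^ i) ` {..e}" using divides_primepow_nat[OF assms] by auto
  moreover have "inj_on (\<lambda>i. p ^ i) {..e}" using assms prime_gt_1_nat by (auto intro: inj_onI)
  ultimately show ?thesis by (simp add: card_image)
qed

lemma card_divisors_mult_coprime:
  fixes x y :: nat
  assumes "coprime x y" "x > 0"
  shows "card {d. d dvd x * y} = card {d. d dvd x} * card {d. d dvd y}"
proof -
  let ?mult = "\<lambda>(a, b). a * b"
  have gcd_eq: "gcd (a * b) x = a" if "a dvd x" "b dvd y" for a b
    using coprime_divisors[OF dvd_refl that(2) assms(1)] that(1)
    by (simp add: gcd_mult_left_right_cancel gcd_nat.absorb1)
  have "inj_on ?mult ({d. d dvd x} \<times> {d. d dvd y})"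
  proof (rule inj_onI, clarsimp)
    fix a b a' b' assume "a dvd x" "b dvd y" "a' dvd x" "b' dvd y" "a * b = a' * b'"
    moreover from this have "a = a'" using gcd_eq by metis
    moreover have "a > 0" using \<open>a dvd x\<close> assms(2) by (rule dvd_pos_nat[rotated])
    ultimately show "a = a' \<and> b = b'" by simp
  qed
  moreover have "?mult ` ({d. d dvd x} \<times> {d. d dvd y}) = {d. d dvd x * y}"
  proof
    show "?mult ` ({d. d dvd x} \<times> {d. d dvd y}) \<subseteq> {d. d dvd x * y}"
      by (auto intro: mult_dvd_mono)
    show "{d. d dvd x * y} \<subseteq> ?mult ` ({d. d dvd x} \<times> {d. d dvd y})"
    proof
      fix d assume "d \<in> {d. d dvd x * y}"
      then obtain a b where "d = a * b" "a dvd x" "b dvd y" using division_decomp by blast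
      then show "d \<in> ?mult ` ({d. d dvd x} \<times> {d. d dvd y})"
        by (intro image_eqI[of _ _ "(a, b)"]) simp_all
    qed
  qed
  ultimately have "card {d. d dvd x * y} = card ({d. d dvd x} \<times> {d. d dvd y})"
    using card_image by fastforce
  then show ?thesis by (simp add: card_cartesian_product)
qed

lemma card_divisors_prod_prime_powers:
  fixes p m :: "'i \<Rightarrow> nat"
  assumes "finite A" "inj_on p A" "\<forall>i\<in>A. prime (p i)"
  shows "card {d. d dvd (\<Prod>i\<in>A. p i ^ m i)} = (\<Prod>i\<in>A. m i + 1)"
  using assms
proof (induction A rule: finite_induct)
  case (insert a A)
  have "coprime (p a) (p i)" if "i \<in> A" for i
    using insert that primes_coprime[of "p a" "p i"] by (auto simp: inj_on_def)
  then have "coprime (p a ^ m a) (\<Prod>i\<in>A. p i ^ m i)"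
    by (simp add: prod_coprime_right)
  then show ?case
    using insert card_divisors_mult_coprime card_divisors_prime_power prime_gt_0_nat
    by (simp add: inj_on_insert)
qed simp

lemma card_nontrivial_divisors:
  assumes "n > 1"
  shows "card (nontrivial_divisors n) = card {d. d dvd n} - 2"
proof -
  have "nontrivial_divisors n = {d. d dvd n} - {1, n}" unfolding nontrivial_divisors_def by auto
  then show ?thesis using assms by (simp add: card_Diff_subset)
qed

lemma squarefree_eq_prod_prime_factors:
  assumes "squarefree (n::nat)"
  shows "n = \<Prod>(prime_factors n)"
proof -
  have "n > 0" using assms by (metis not_squarefree_0 gr0I)
  then have "n = (\<Prod>p\<in>prime_factors n. p ^ multiplicity p n)" by (rule prime_factorization_nat)
  also have "\<dots> = \<Prod>(prime_factors n)"
    using assms \<open>n > 0\<close> by (intro prod.cong) (auto simp: squarefree_factorial_semiring')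
  finally show ?thesis .
qed

lemma squarefree_card_prime_factors_ge_2:
  fixes n :: nat
  assumes "squarefree n" "n > 1" "\<not> prime n"
  shows "card (prime_factors n) \<ge> 2"
proof -
  obtain p where "prime p" "p dvd n" using prime_factor_nat[of n] assms(2) by auto
  then have "p \<in> prime_factors n" using assms(2) by (simp add: in_prime_factors_iff)
  then have "prime_factors n \<noteq> {}" by blast
  moreover have "card (prime_factors n) \<noteq> 1"
  proof
    assume "card (prime_factors n) = 1"
    then obtain p where "prime_factors n = {p}" by (auto simp: card_Suc_eq)
    then show False
      using squarefree_eq_prod_prime_factors[OF assms(1)] assms(3)
        in_prime_factors_imp_prime[of p n] by simp
  qed
  ultimately show ?thesis by (metis One_nat_def card_0_eq finite_set_mset less_2_cases not_le)
qed

lemma prime_factors_prod_prime_powers: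
  fixes p m :: "'i \<Rightarrow> nat"
  assumes "finite A" "\<forall>i\<in>A. prime (p i)" "\<forall>i\<in>A. m i > 0"
  shows "prime_factors (\<Prod>i\<in>A. p i ^ m i) = p ` A"
proof -
  have "prime_factors (p i ^ m i) = {p i}" if "i \<in> A" for i
    using assms(2,3) that by (simp add: prime_factorization_prime_power)
  moreover have "0 \<notin> (\<lambda>i. p i ^ m i) ` A" using assms(2) by auto
  then have "prime_factors (\<Prod>i\<in>A. p i ^ m i) = (\<Union>i\<in>A. prime_factors (p i ^ m i))"
    using prime_factors_prod[OF assms(1)] by simp
  ultimately show ?thesis by auto
qed

lemma squarefree_prod_prime_powers_iff:
  fixes p m :: "'i \<Rightarrow> nat"
  assumes "finite A" "inj_on p A" "\<forall>i\<in>A. prime (p i)"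
  shows "squarefree (\<Prod>i\<in>A. p i ^ m i) \<longleftrightarrow> (\<forall>i\<in>A. m i \<le> 1)"
proof
  assume sf: "squarefree (\<Prod>i\<in>A. p i ^ m i)"
  show "\<forall>i\<in>A. m i \<le> 1"
  proof
    fix i assume "i \<in> A"
    have "p i ^ m i dvd (\<Prod>i\<in>A. p i ^ m i)" using assms(1) \<open>i \<in> A\<close> by (rule dvd_prodI)
    then have "squarefree (p i ^ m i)" using sf by (rule squarefree_mono)
    then show "m i \<le> 1" using assms(3) \<open>i \<in> A\<close> by (auto simp: squarefree_power_iff)
  qed
next
  assume "\<forall>i\<in>A. m i \<le> 1"
  then have "squarefree (p i ^ m i)" if "i \<in> A" for i
    using that assms(3) squarefree_prime[of "p i"] le_Suc_eq by (auto simp: squarefree_power_iff)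
  moreover have "coprime (p i ^ m i) (p j ^ m j)" if "i \<in> A" "j \<in> A" "i \<noteq> j" for i j
    using that assms(2,3) primes_coprime[of "p i" "p j"] by (auto simp: inj_on_def)
  ultimately show "squarefree (\<Prod>i\<in>A. p i ^ m i)" by (rule squarefree_prod_coprime[rotated])
qed

lemma prod_prime_powers_gt_1:
  fixes p m :: "'i \<Rightarrow> nat"
  assumes "finite A" "\<forall>i\<in>A. prime (p i)" "\<exists>i\<in>A. m i > 0"
  shows "(\<Prod>i\<in>A. p i ^ m i) > 1"
proof -
  obtain j where j: "j \<in> A" "m j > 0" using assms(3) by blast
  have "p j ^ m j dvd (\<Prod>i\<in>A. p i ^ m i)" using assms(1) j(1) by (rule dvd_prodI)
  moreover have "p j > 1" using assms(2) j(1) prime_gt_1_nat by blast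
  then have "p j ^ m j > 1" using j(2) by (metis one_less_power)
  moreover have "(\<Prod>i\<in>A. p i ^ m i) > 0" using assms(2) by (simp add: prime_gt_0_nat prod_pos)
  ultimately show ?thesis by (meson dvd_imp_le less_le_trans)
qed

lemma card_nontrivial_divisors_prod_prime_powers:
  fixes p m :: "'i \<Rightarrow> nat"
  assumes "finite A" "inj_on p A" "\<forall>i\<in>A. prime (p i)" "\<exists>i\<in>A. m i > 0"
  shows "real (card (nontrivial_divisors (\<Prod>i\<in>A. p i ^ m i))) = (\<Prod>i\<in>A. real (m i + 1)) - 2"
proof -
  let ?n = "\<Prod>i\<in>A. p i ^ m i"
  have "?n > 1" using assms(1,3,4) by (rule prod_prime_powers_gt_1)
  then have "card {1, ?n} \<le> card {d. d dvd ?n}" by (intro card_mono) auto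
  then show ?thesis
    using card_nontrivial_divisors[OF \<open>?n > 1\<close>] \<open>?n > 1\<close>
      card_divisors_prod_prime_powers[OF assms(1-3)] by (simp add: of_nat_diff)
qed

section \<open>When the largest Laplacian eigenvalue of the divisor graph is its order\<close>

lemma finite_nontrivial_divisors: "n > 0 \<Longrightarrow> finite (nontrivial_divisors n)"
  unfolding nontrivial_divisors_def by simp

lemma nontrivial_divisors_nonempty:
  assumes "n > 1" "\<not> prime n"
  shows "nontrivial_divisors n \<noteq> {}"
proof -
  obtain p where "prime p" "p dvd n" using prime_factor_nat[of n] assms(1) by auto
  then have "p \<in> nontrivial_divisors n" using assms unfolding nontrivial_divisors_def by auto
  then show ?thesis by blast
qed

lemma simple_graph_divisor_adj: "simple_graph_on V (divisor_adj n)"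
  unfolding simple_graph_on_def divisor_adj_def by (simp add: gcd.commute)

lemma essential_divisor_1: "essential_divisor n 1"
  unfolding essential_divisor_def by simp

lemma essential_divisor_prime:
  assumes q: "prime q" and q2: "q\<^sup>2 dvd n"
  shows "essential_divisor n q"
  unfolding essential_divisor_def
proof (intro allI impI notI)
  fix e assume e: "e dvd n \<and> e \<noteq> n" and lcm: "lcm q e = n"
  show False
  proof (cases "q dvd e")
    case True
    then show False using e lcm by (simp add: lcm_proj2_if_dvd)
  next
    case False
    then have "lcm q e = q * e" using prime_imp_coprime[OF q] by (simp add: lcm_coprime)
    then have "q * q dvd q * e" using q2 lcm by (simp add: power2_eq_square)
    then show False using False q prime_gt_0_nat by simp
  qed
qed

lemma essential_divisor_squarefree_iff:
  assumes sf: "squarefree n" and g: "g dvd n"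
  shows "essential_divisor n g \<longleftrightarrow> g = 1"
proof
  assume ess: "essential_divisor n g"
  show "g = 1"
  proof (rule ccontr)
    assume "g \<noteq> 1"
    then obtain r where r: "prime r" "r dvd g" using prime_factor_nat by blast
    then obtain e where n: "n = r * e" using g by (meson dvd_trans dvdE)
    have "\<not> r dvd e"
    proof
      assume "r dvd e"
      then have "r\<^sup>2 dvd n" unfolding n power2_eq_square by simp
      then show False using squarefreeD[OF sf] r(1) by (meson not_prime_unit)
    qed
    then have "r * e dvd lcm g e"
      using prime_imp_coprime[OF r(1)] r(2) by (meson divides_mult dvd_lcm1 dvd_lcm2 dvd_trans)
    then have "lcm g e = n" using g n by (simp add: dvd_antisym)
    moreover have "e \<noteq> n"
    proof
      assume "e = n"
      moreover have "n \<noteq> 0" using sf by (metis not_squarefree_0)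
      ultimately show False using n r(1) by auto
    qed
    ultimately show False using ess n unfolding essential_divisor_def by auto
  qed
qed (use essential_divisor_1 in simp)

lemma divisor_adj_prime_square_dvd:
  assumes q: "prime q" and q2: "q\<^sup>2 dvd n" and u: "u \<noteq> q"
  shows "divisor_adj n q u"
proof (cases "q dvd u")
  case True
  then show ?thesis
    using u essential_divisor_prime[OF q q2] by (simp add: divisor_adj_def gcd_nat.absorb1)
next
  case False
  then show ?thesis
    using u prime_imp_coprime[OF q] essential_divisor_1 by (simp add: divisor_adj_def)
qed

lemma nontrivial_divisors_mult_primes:
  assumes p: "prime p" and q: "prime q" and "p \<noteq> q"
  shows "nontrivial_divisors (p * q) = {p, q}"
proof -
  have "d \<in> {1, p, q, p * q}" if "d dvd p * q" for d
  proof (cases "p dvd d")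
    case True
    then obtain t where "d = p * t" by blast
    then have "t dvd q" using that p by (simp add: prime_gt_0_nat)
    then show ?thesis using q \<open>d = p * t\<close> by (auto simp: prime_nat_iff)
  next
    case False
    then have "d dvd q" using that prime_imp_coprime[OF p] coprime_commute
      by (metis coprime_dvd_mult_right_iff)
    then show ?thesis using q by (auto simp: prime_nat_iff)
  qed
  moreover have "p \<noteq> 1" "q \<noteq> 1" "p \<noteq> p * q" "q \<noteq> p * q"
    using p q assms(3) prime_gt_1_nat by (auto simp: prime_product)
  ultimately show ?thesis unfolding nontrivial_divisors_def by auto
qed

lemma mult_primes_in_nontrivial_divisors:
  assumes r: "prime r" "r dvd n" and q: "prime q" "q dvd n" and "r \<noteq> q"
    and three: "card (prime_factors n) \<ge> 3"
  shows "r * q \<in> nontrivial_divisors n"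
proof -
  have "\<not> prime_factors n \<subseteq> {r, q}"
  proof
    assume "prime_factors n \<subseteq> {r, q}"
    then have "card (prime_factors n) \<le> card {r, q}" by (intro card_mono) auto
    also have "\<dots> \<le> 2" by (simp add: card_insert_le_m1)
    finally show False using three by simp
  qed
  then obtain s where s: "s \<in> prime_factors n" "s \<noteq> r" "s \<noteq> q" by blast
  have "r * q \<noteq> n"
  proof
    assume "r * q = n"
    then have "s dvd r * q" using s by auto
    moreover have "prime s" using s(1) by (rule in_prime_factors_imp_prime)
    ultimately show False using s r(1) q(1) by (metis prime_dvd_mult_iff primes_dvd_imp_eq)
  qed
  moreover have "r * q dvd n"
    using r q primes_coprime[OF r(1) q(1) \<open>r \<noteq> q\<close>] by (simp add: divides_mult)
  moreover have "r * q \<noteq> 1" using r(1) by auto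
  ultimately show ?thesis unfolding nontrivial_divisors_def by simp
qed

lemma compl_diameter_divisor_adj_squarefree:
  assumes sf: "squarefree n" and three: "card (prime_factors n) \<ge> 3"
    and u: "u \<in> nontrivial_divisors n" and w: "w \<in> nontrivial_divisors n" and "u \<noteq> w"
  shows "compl_adj (divisor_adj n) u w \<or>
    (\<exists>y\<in>nontrivial_divisors n. compl_adj (divisor_adj n) u y \<and> compl_adj (divisor_adj n) y w)"
proof -
  have compl: "compl_adj (divisor_adj n) a b \<longleftrightarrow> a \<noteq> b \<and> \<not> coprime a b" if "a dvd n" for a b
    using essential_divisor_squarefree_iff[OF sf, of "gcd a b"] that
    by (auto simp: compl_adj_def divisor_adj_def coprime_iff_gcd_eq_1 intro: dvd_trans)
  have u': "u dvd n" "u \<noteq> 1" and w': "w dvd n" "w \<noteq> 1"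
    using u w unfolding nontrivial_divisors_def by auto
  show ?thesis
  proof (cases "coprime u w")
    case False
    then show ?thesis using compl u' \<open>u \<noteq> w\<close> by blast
  next
    case True
    obtain r where r: "prime r" "r dvd u" using prime_factor_nat[OF u'(2)] by blast
    obtain q where q: "prime q" "q dvd w" using prime_factor_nat[OF w'(2)] by blast
    have "\<not> r dvd w" "\<not> q dvd u"
      using True r q by (meson coprime_common_divisor not_prime_unit)+
    then have "r * q \<in> nontrivial_divisors n"
      using r q u'(1) w'(1) three
      by (intro mult_primes_in_nontrivial_divisors) (auto intro: dvd_trans)
    moreover have "r * q \<noteq> u" "r * q \<noteq> w" using \<open>\<not> r dvd w\<close> \<open>\<not> q dvd u\<close> by auto
    moreover have "\<not> coprime u (r * q)" "\<not> coprime (r * q) w"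
      using r q by (meson coprime_common_divisor dvd_mult dvd_triv_left dvd_triv_right
          not_prime_unit)+
    ultimately show ?thesis using compl u' by (auto simp: nontrivial_divisors_def)
  qed
qed

lemma mat_eigenvalue_divisor_graph_card_iff:
  assumes n: "n > 1" and not_prime: "\<not> prime n" and not_sq: "\<nexists>q. prime q \<and> n = q\<^sup>2"
  defines "D \<equiv> nontrivial_divisors n"
  shows "mat_eigenvalue D (laplacian D (divisor_adj n)) (real (card D)) \<longleftrightarrow>
    \<not> squarefree n \<or> card (prime_factors n) = 2"
proof -
  have fin: "finite D" unfolding D_def using n by (simp add: finite_nontrivial_divisors)
  note G = simple_graph_divisor_adj[of D n]
  consider "\<not> squarefree n" | "squarefree n" "card (prime_factors n) = 2"
    | "squarefree n" "card (prime_factors n) \<ge> 3"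
    using squarefree_card_prime_factors_ge_2[OF _ n not_prime] by force
  then show ?thesis
  proof cases
    case 1
    then obtain q where q: "prime q" "q\<^sup>2 dvd n"
      using n squarefree_factorial_semiring[of n] by auto
    then have "q dvd n" by (meson dvd_power dvd_trans zero_less_numeral)
    then obtain w where w: "n = q * w" by blast
    have "q \<in> D" "w \<in> D" "w \<noteq> q"
      using q n not_prime not_sq w prime_gt_1_nat[of q] unfolding D_def nontrivial_divisors_def
      by (auto simp: power2_eq_square)
    then show ?thesis
      using 1 mat_eigenvalue_laplacian_card_if_dominating[OF fin G]
        divisor_adj_prime_square_dvd[OF q]
      by blast
  next
    case 2
    then obtain p q where pq: "prime_factors n = {p, q}" "p \<noteq> q" by (auto simp: card_2_iff)
    then have primes: "prime p" "prime q" by (auto intro: in_prime_factors_imp_prime)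
    have "n = p * q" using squarefree_eq_prod_prime_factors[OF 2(1)] pq by simp
    then have "D = {p, q}"
      unfolding D_def using nontrivial_divisors_mult_primes primes pq(2) by simp
    moreover have "divisor_adj n p q"
      using primes_coprime[OF primes pq(2)] pq(2) essential_divisor_1
      by (simp add: divisor_adj_def coprime_iff_gcd_eq_1)
    ultimately show ?thesis
      using 2 mat_eigenvalue_laplacian_card_if_dominating[OF fin G, of p q] pq(2) by auto
  next
    case 3
    then show ?thesis
      using not_mat_eigenvalue_laplacian_card[OF fin G] compl_diameter_divisor_adj_squarefree
      unfolding D_def by simp
  qed
qed

theorem mainTheorem15:
  fixes n k :: nat and p m :: "nat \<Rightarrow> nat"
  assumes k: "k \<ge> 1"
    and primes: "\<forall>i\<in>{1..k}. prime (p i)"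
    and incr: "\<forall>i\<in>{1..k}. \<forall>j\<in>{1..k}. i < j \<longrightarrow> p i < p j"
    and mpos: "\<forall>i\<in>{1..k}. m i > 0"
    and n: "n = (\<Prod>i\<in>{1..k}. p i ^ m i)"
    and not_prime: "\<not> prime n"
    and not_sq: "\<not> (\<exists>q::nat. prime q \<and> n = q ^ 2)"
  defines "T \<equiv> (\<Prod>i\<in>{1..k}. real (m i + 1)) - 2"
  shows "lap_max_eig (eig_vertices (residue_ring (int n))) (eig_adj (residue_ring (int n))) \<le> T
    \<and> (lap_max_eig (eig_vertices (residue_ring (int n))) (eig_adj (residue_ring (int n))) = T
       \<longleftrightarrow> ((k = 1 \<and> m 1 > 2)
            \<or> (k = 2 \<and> m 1 = 1 \<and> m 2 = 1)
            \<or> (k \<ge> 2 \<and> (\<exists>i\<in>{1..k}. m i > 1))))"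
proof -
  have inj: "inj_on p {1..k}" using incr by (intro inj_onI) (metis linorder_neqE_nat less_irrefl)
  have T: "T = real (card (nontrivial_divisors n))"
    unfolding T_def n using inj primes mpos k
    by (subst card_nontrivial_divisors_prod_prime_powers) auto
  have "n > 1" unfolding n using primes mpos k by (intro prod_prime_powers_gt_1) auto
  have sf: "\<not> squarefree n \<longleftrightarrow> (\<exists>i\<in>{1..k}. m i > 1)"
    unfolding n using primes
    by (subst squarefree_prod_prime_powers_iff[OF _ inj]) (auto simp: not_le)
  have pf: "card (prime_factors n) = k"
    unfolding n using primes mpos inj
    by (subst prime_factors_prod_prime_powers) (auto simp: card_image)
  have m1: "m 1 > 2" if "k = 1"
  proof -
    have "n = p 1 ^ m 1" "prime (p 1)" "m 1 > 0" using n primes mpos that by auto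
    then have "m 1 \<noteq> 1" "m 1 \<noteq> 2" using not_prime not_sq by auto
    then show ?thesis using \<open>m 1 > 0\<close> by presburger
  qed
  have cond: "(\<exists>i\<in>{1..k}. m i > 1) \<or> k = 2 \<longleftrightarrow>
      (k = 1 \<and> m 1 > 2) \<or> (k = 2 \<and> m 1 = 1 \<and> m 2 = 1) \<or> (k \<ge> 2 \<and> (\<exists>i\<in>{1..k}. m i > 1))"
  proof (cases "k = 1")
    case False
    have "m 1 = 1 \<and> m 2 = 1" if "k = 2" "\<not> (\<exists>i\<in>{1..k}. m i > 1)"
      using that mpos by (metis atLeastAtMost_iff le_refl one_le_numeral less_one nat_neq_iff)
    then show ?thesis using False k by auto
  qed (use m1 in auto)
  have "finite (nontrivial_divisors n)" "nontrivial_divisors n \<noteq> {}"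
    using \<open>n > 1\<close> not_prime
    by (simp_all add: finite_nontrivial_divisors nontrivial_divisors_nonempty)
  note bound = lap_max_eig_le_card[OF this(1) simple_graph_divisor_adj this(2)]
  show ?thesis
    unfolding lap_max_eig_essential_ideal_graph[OF \<open>n > 1\<close>] T bound(2) cond[symmetric]
      mat_eigenvalue_divisor_graph_card_iff[OF \<open>n > 1\<close> not_prime not_sq] sf pf
    using bound(1) by blast
qed

end
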